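(* Let $\ell\ge 1$ be a fixed integer and $b>1$ a constant. If $|P_n^\ell|\in O(b^n)$ as $n\to\infty$, then $k_n\ge \dfrac{\ell\log_2 n}{\log_2 b}+O(1)$.
   Context: A system of $k$ stacks in series consists of an input queue, stacks $1,\dots,k$, and an output queue. A state records the contents of each stack and each queue (finitely many distinct labelled elements); there is one additional "illegal" state $\varnothing$. The moves are $m_1,\dots,m_{k+1}$: $m_i$ ($1\le i\le k$) pushes an element onto stack $i$, taking it from the front of the input queue if $i=1$ and popping it from the top of stack $i-1$ if $i>1$; $m_{k+1}$ pops the top of stack $k$ and enqueues it at the back of the output queue. For a word $w$ and a state $s$, $w\ast s$ is obtained by applying the moves of $w$ left to right, with $w\ast s=\varnothing$ if some move is illegal and $w\ast\varnothing=\varnothing$. $I(n,k)$ is the state with $1,\dots,n$ in the input queue (front to back) and everything else empty; for $\pi\in S_n$, $t_\pi$ is the state with only the output queue nonempty, containing $\pi(1),\dots,\pi(n)$ front to back. $P_n^k\subseteq S_n$ is the set of $\pi$ such that $w\ast I(n,k)=t_\pi$ for some word $w$. $k_n$ is the smallest integer $k$ with $P_n^k=S_n$. *)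

theory Defs
  imports Main "HOL-Library.Landau_Symbols" "HOL-Combinatorics.Permutations"
begin

text \<open>A state of a system of k stacks in series: Some (input queue (front first),
  list of the k stacks (index i-1 is stack i, each listed top first), output queue
  (front first)); None is the illegal state.\<close>
type_synonym state = "(nat list \<times> nat list list \<times> nat list) option"

fun move :: "nat \<Rightarrow> nat \<Rightarrow> state \<Rightarrow> state" where
  "move k i None = None"
| "move k i (Some (inp, st, out)) =
     (if i = 1 \<and> 1 \<le> k then
        (case inp of [] \<Rightarrow> None | x # xs \<Rightarrow> Some (xs, st[0 := x # st ! 0], out))
      else if 2 \<le> i \<and> i \<le> k then
        (case st ! (i - 2) of [] \<Rightarrow> None
          | x # xs \<Rightarrow> Some (inp, st[i - 2 := xs, i - 1 := x # st ! (i - 1)], out))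
      else if i = k + 1 \<and> 1 \<le> k then
        (case st ! (k - 1) of [] \<Rightarrow> None
          | x # xs \<Rightarrow> Some (inp, st[k - 1 := xs], out @ [x]))
      else None)"

definition act :: "nat \<Rightarrow> nat list \<Rightarrow> state \<Rightarrow> state" where
  "act k w s = foldl (\<lambda>s i. move k i s) s w"

definition init_state :: "nat \<Rightarrow> nat \<Rightarrow> state" where
  "init_state n k = Some ([1..<n+1], replicate k [], [])"

definition target_state :: "nat \<Rightarrow> nat \<Rightarrow> (nat \<Rightarrow> nat) \<Rightarrow> state" where
  "target_state n k \<pi> = Some ([], replicate k [], map \<pi> [1..<n+1])"

definition Pnk :: "nat \<Rightarrow> nat \<Rightarrow> (nat \<Rightarrow> nat) set" where
  "Pnk n k = {\<pi>. \<pi> permutes {1..n} \<and>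
      (\<exists>w \<in> lists {1..k+1}. act k w (init_state n k) = target_state n k \<pi>)}"

definition kn :: "nat \<Rightarrow> nat" where
  "kn n = (LEAST k. 1 \<le> k \<and> Pnk n k = {\<pi>. \<pi> permutes {1..n}})"

end

theory Submission
  imports Defs "HOL-Combinatorics.Multiset_Permutations"
begin

text \<open>
  A system of \<open>l + m\<close>
  stacks in series behaves exactly like a system of \<open>l\<close> stacks whose output is fed into a
  system of \<open>m\<close> stacks, and since a sequence of moves acts on positions rather than labels,
  relabelling the intermediate word gives \<open>|P_n^(l+m)| \<le> |P_n^l| |P_n^m|\<close>.  Covering \<open>k_n\<close>
  stacks by \<open>a = k_n div l + 1\<close> blocks of \<open>l\<close> stacks yields
  \<open>n! = |P_n^(k_n)| \<le> |P_n^l|^a \<le> (C b^n)^a\<close>, and comparing logarithms using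
  \<open>ln n! \<ge> n ln n - n\<close> gives \<open>a ln b \<ge> ln n - O(1)\<close>, hence
  \<open>k_n \<ge> l a - l \<ge> l log n / log b - O(1)\<close>.
\<close>

lemma act_Nil [simp]: "act k [] s = s"
  by (simp add: act_def)

lemma act_Cons [simp]: "act k (i # w) s = act k w (move k i s)"
  by (simp add: act_def)

lemma act_append: "act k (u @ w) s = act k w (act k u s)"
  by (simp add: act_def)

lemma act_None [simp]: "act k w None = None"
  by (induction w) auto

declare move.simps(2) [simp del]

lemma move_SomeE:
  assumes "move k i (Some (inp, st, out)) = Some s'"
  obtains (push) x xs where "i = 1" "1 \<le> k" "inp = x # xs" "s' = (xs, st[0 := x # st ! 0], out)"
  | (shift) x xs where "2 \<le> i" "i \<le> k" "st ! (i - 2) = x # xs"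
      "s' = (inp, st[i - 2 := xs, i - 1 := x # st ! (i - 1)], out)"
  | (pop) x xs where "i = k + 1" "1 \<le> k" "st ! (k - 1) = x # xs"
      "s' = (inp, st[k - 1 := xs], out @ [x])"
  using assms by (auto simp: move.simps split: if_splits list.splits)

lemma move_Some_imp_valid: "move k i s \<noteq> None \<Longrightarrow> i \<in> {1..k+1}"
  by (cases s) (auto simp: move.simps split: if_splits)

lemma act_Some_imp_lists: "act k w s \<noteq> None \<Longrightarrow> w \<in> lists {1..k+1}"
proof (induction w arbitrary: s)
  case (Cons i w)
  then have "move k i s \<noteq> None" by (metis act_Cons act_None)
  with Cons show ?case using move_Some_imp_valid by auto
qed simp

lemma length_move:
  "move k i (Some (inp, st, out)) = Some (inp', st', out') \<Longrightarrow> length st' = length st"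
  by (erule move_SomeE) auto

lemma move_input_unchanged:
  "move k i (Some (inp, st, out)) = Some (inp', st', out') \<Longrightarrow> 2 \<le> i \<Longrightarrow> inp' = inp"
  by (erule move_SomeE) auto

lemma move_output_unchanged:
  "move k i (Some (inp, st, out)) = Some (inp', st', out') \<Longrightarrow> i \<le> k \<Longrightarrow> out' = out"
  by (erule move_SomeE) auto

lemma act_invariant:
  assumes step: "\<And>i s s'. P s \<Longrightarrow> move k i (Some s) = Some s' \<Longrightarrow> P s'"
    and "P s" "act k w (Some s) = Some s'"
  shows "P s'"
  using assms(2,3)
proof (induction w arbitrary: s)
  case (Cons i w)
  obtain t where t: "move k i (Some s) = Some t"
    using Cons.prems(2) by (cases "move k i (Some s)") auto
  have "P t" by (rule step[OF Cons.prems(1) t])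
  moreover have "act k w (Some t) = Some s'" using Cons.prems(2) t by simp
  ultimately show ?case by (rule Cons.IH)
qed simp

lemma length_act:
  assumes "act k w (Some (inp, st, out)) = Some (inp', st', out')"
  shows "length st' = length st"
  using act_invariant[where P = "\<lambda>s. length (fst (snd s)) = length st", OF _ _ assms]
  by (metis fst_conv snd_conv length_move prod_cases3)

lemma move_prepend_output:
  "move k i (map_option (\<lambda>(inp, st, out). (inp, st, p @ out)) s) =
   map_option (\<lambda>(inp, st, out). (inp, st, p @ out)) (move k i s)"
  by (cases s) (auto simp: move.simps split: list.split)

lemma act_prepend_output:
  "act k w (map_option (\<lambda>(inp, st, out). (inp, st, p @ out)) s) =
   map_option (\<lambda>(inp, st, out). (inp, st, p @ out)) (act k w s)"
  by (induction w arbitrary: s) (simp_all add: move_prepend_output)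

lemma act_prepend_outputI:
  "act k w (Some (inp, st, out)) = Some (inp', st', out') \<Longrightarrow>
   act k w (Some (inp, st, p @ out)) = Some (inp', st', p @ out')"
  using act_prepend_output[of k w p "Some (inp, st, out)"] by simp

lemma act_prepend_outputD:
  "act k w (Some (inp, st, p @ out)) = Some (inp', st', out') \<Longrightarrow>
   \<exists>out''. out' = p @ out'' \<and> act k w (Some (inp, st, out)) = Some (inp', st', out'')"
  using act_prepend_output[of k w p "Some (inp, st, out)"]
  by (cases "act k w (Some (inp, st, out))") auto

lemma mset_concat_push:
  "i < length st \<Longrightarrow> mset (concat (st[i := y # st ! i])) = add_mset y (mset (concat st))"
  by (induction st arbitrary: i) (auto split: nat.split)

lemma mset_concat_pop:
  "i < length st \<Longrightarrow> st ! i = y # ys \<Longrightarrow> add_mset y (mset (concat (st[i := ys]))) = mset (concat st)"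
  by (induction st arbitrary: i) (auto split: nat.split)

lemma move_preserves_mset:
  assumes "length st = k" "move k i (Some (inp, st, out)) = Some (inp', st', out')"
  shows "mset inp' + mset (concat st') + mset out' = mset inp + mset (concat st) + mset out"
  using assms(2)
proof (cases rule: move_SomeE)
  case (push x xs)
  then show ?thesis using assms(1) by (simp add: mset_concat_push)
next
  case (shift x xs)
  let ?st = "st[i - 2 := xs]"
  have "?st ! (i - 1) = st ! (i - 1)" using shift by simp
  then have "mset (concat (?st[i - 1 := x # st ! (i - 1)])) = add_mset x (mset (concat ?st))"
    using mset_concat_push[of "i - 1" ?st x] shift assms(1) by simp
  also have "\<dots> = mset (concat st)" using mset_concat_pop[of "i - 2" st x xs] shift assms(1) by simp
  finally show ?thesis using shift by simp
next
  case (pop x xs)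
  then show ?thesis using assms(1) mset_concat_pop[of "k - 1" st x xs] by simp
qed

lemma act_preserves_mset:
  assumes "length st = k" "act k w (Some (inp, st, out)) = Some (inp', st', out')"
  shows "mset inp' + mset (concat st') + mset out' = mset inp + mset (concat st) + mset out"
proof -
  let ?P = "\<lambda>(inp', st', out'). length st' = k \<and>
    mset inp' + mset (concat st') + mset out' = mset inp + mset (concat st) + mset out"
  have "?P (inp', st', out')"
  proof (rule act_invariant[of ?P, OF _ _ assms(2)])
    fix i s1 s2 assume "?P s1" "move k i (Some s1) = Some s2"
    moreover obtain a b c a' b' c' where "s1 = (a, b, c)" "s2 = (a', b', c')"
      by (cases s1, cases s2)
    ultimately show "?P s2" using move_preserves_mset[of b k i a c a' b' c'] length_move by auto
  qed (use assms(1) in simp)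
  then show ?thesis by simp
qed

definition map_state :: "(nat \<Rightarrow> nat) \<Rightarrow> state \<Rightarrow> state" where
  "map_state f = map_option (\<lambda>(inp, st, out). (map f inp, map (map f) st, map f out))"

lemma move_map_state:
  "length st = k \<Longrightarrow>
   move k i (map_state f (Some (inp, st, out))) = map_state f (move k i (Some (inp, st, out)))"
  by (auto simp: move.simps map_state_def nth_map map_update split: list.split)

lemma act_map_state:
  "length st = k \<Longrightarrow>
   act k w (map_state f (Some (inp, st, out))) = map_state f (act k w (Some (inp, st, out)))"
proof (induction w arbitrary: inp st out)
  case (Cons i w)
  show ?case
  proof (cases "move k i (Some (inp, st, out))")
    case None
    then show ?thesis using move_map_state[OF Cons.prems, of i f] by (simp add: map_state_def)
  next
    case (Some s)
    then obtain inp' st' out' where s: "s = (inp', st', out')" "length st' = k"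
      using length_move Cons.prems by (metis prod_cases3)
    then show ?thesis using Some move_map_state[OF Cons.prems, of i f] Cons.IH[OF s(2)] by simp
  qed
qed simp

lemma move_series_front:
  assumes "length L = l" "i \<le> l"
  shows "move (l + m) i (Some (inp, L @ R, out)) =
    map_option (\<lambda>(inp', L', _). (inp', L' @ R, out)) (move l i (Some (inp, L, [])))"
  using assms by (auto simp: move.simps nth_append list_update_append split: list.split)

lemma move_series_transfer:
  assumes "length L = l" "length R = m" "1 \<le> l" "1 \<le> m"
  shows "move (l + m) (l + 1) (Some (inp, L @ R, out)) =
    (case L ! (l - 1) of [] \<Rightarrow> None
     | x # xs \<Rightarrow> Some (inp, L[l - 1 := xs] @ R[0 := x # R ! 0], out))"
  using assms by (auto simp: move.simps nth_append list_update_append split: list.split)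

lemma move_series_back:
  assumes "length L = l" "length R = m" "1 \<le> l" "1 \<le> m" "2 \<le> j"
  shows "move (l + m) (l + j) (Some (inp, L @ R, out)) =
    map_option (\<lambda>(_, R', out'). (inp, L @ R', out')) (move m j (Some (q, R, out)))"
  using assms by (auto simp: move.simps nth_append list_update_append split: list.split)

lemma move_series_SomeE:
  assumes "length L = l" "length R = m" "1 \<le> l" "1 \<le> m"
    and "move (l + m) i (Some (inp, L @ R, out)) = Some s"
  obtains (front) inp1 L1 where "move l i (Some (inp, L, [])) = Some (inp1, L1, [])"
    "length L1 = l" "s = (inp1, L1 @ R, out)"
  | (transfer) x xs where "i = l + 1" "L ! (l - 1) = x # xs"
    "s = (inp, L[l - 1 := xs] @ R[0 := x # R ! 0], out)"
  | (rear) j R1 out1 where "2 \<le> j" "\<And>q. move m j (Some (q, R, out)) = Some (q, R1, out1)"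
    "length R1 = m" "s = (inp, L @ R1, out1)"
proof -
  consider "i \<le> l" | "i = l + 1" | j where "i = l + j" "2 \<le> j"
  proof (cases "l + 2 \<le> i")
    case True
    then show ?thesis using that(3)[of "i - l"] by simp
  qed (use that(1,2) in linarith)
  then show ?thesis
  proof cases
    case 1
    note step = move_series_front[OF assms(1) 1, of m inp R out]
    with assms(5) obtain inp1 L1 out' where mv: "move l i (Some (inp, L, [])) = Some (inp1, L1, out')"
      by (cases "move l i (Some (inp, L, []))") auto
    moreover have "out' = []" using move_output_unchanged[OF mv 1] .
    moreover have "length L1 = l" using length_move[OF mv] assms(1) by simp
    ultimately show ?thesis using front step assms(5) by simp
  next
    case 2
    with assms move_series_transfer[OF assms(1-4), of inp out] show ?thesis
      using transfer by (cases "L ! (l - 1)") auto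
  next
    case (3 j)
    note step = move_series_back[OF assms(1-4) 3(2), of inp out]
    obtain q R1 out1 where mv: "move m j (Some ([], R, out)) = Some (q, R1, out1)"
      using assms(5) 3(1) step[of "[]"] by (cases "move m j (Some ([], R, out))") auto
    have "move m j (Some (q', R, out)) = Some (q', R1, out1)" for q'
      using step[of q'] step[of "[]"] mv assms(5) 3(1) move_input_unchanged[OF _ 3(2)]
      by (cases "move m j (Some (q', R, out))") fastforce+
    moreover have "length R1 = m" using length_move[OF mv] assms(2) by simp
    ultimately show ?thesis using rear 3 step[of "[]"] mv assms(5) by simp
  qed
qed

lemma act_pop_last_Cons:
  assumes "1 \<le> l" "L ! (l - 1) = x # xs"
    and "act l w (Some (inp, L[l - 1 := xs], [])) = Some (inp', L', zs)"
  shows "act l ((l + 1) # w) (Some (inp, L, [])) = Some (inp', L', x # zs)"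
  using assms act_prepend_outputI[OF assms(3), of "[x]"] by (simp add: move.simps)

lemma act_series_split:
  assumes "length L = l" "length R = m" "1 \<le> l" "1 \<le> m"
    and "act (l + m) w (Some (inp, L @ R, out)) = Some (inp', S', out')"
  shows "\<exists>L' R' zs w1 w2. S' = L' @ R' \<and> length L' = l \<and>
    act l w1 (Some (inp, L, [])) = Some (inp', L', zs) \<and> act m w2 (Some (zs, R, out)) = Some ([], R', out')"
  using assms
proof (induction w arbitrary: inp L R out)
  case Nil
  then show ?case by (intro exI[of _ L] exI[of _ R] exI[of _ "[]"] exI[of _ "[]"]) auto
next
  case (Cons i w)
  obtain s where mv: "move (l + m) i (Some (inp, L @ R, out)) = Some s"
    and rest: "act (l + m) w (Some s) = Some (inp', S', out')"
    using Cons.prems(5) by (cases "move (l + m) i (Some (inp, L @ R, out))") auto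
  from Cons.prems(1-4) mv show ?case
  proof (cases rule: move_series_SomeE)
    case (front inp1 L1)
    with Cons.IH[OF front(2) Cons.prems(2-4)] rest obtain L' R' zs w1 w2 where
      "S' = L' @ R'" "length L' = l" "act l w1 (Some (inp1, L1, [])) = Some (inp', L', zs)"
      "act m w2 (Some (zs, R, out)) = Some ([], R', out')"
      by blast
    moreover from this(3) have "act l (i # w1) (Some (inp, L, [])) = Some (inp', L', zs)"
      using front(1) by simp
    ultimately show ?thesis by blast
  next
    case (transfer x xs)
    have "length (L[l - 1 := xs]) = l" "length (R[0 := x # R ! 0]) = m"
      using Cons.prems(1,2) by simp_all
    from Cons.IH[OF this Cons.prems(3,4)] rest transfer(3) obtain L' R' zs w1 w2 where
      "S' = L' @ R'" "length L' = l" "act l w1 (Some (inp, L[l - 1 := xs], [])) = Some (inp', L', zs)"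
      "act m w2 (Some (zs, R[0 := x # R ! 0], out)) = Some ([], R', out')"
      by blast
    moreover from this(3) have "act l ((l + 1) # w1) (Some (inp, L, [])) = Some (inp', L', x # zs)"
      by (rule act_pop_last_Cons[OF Cons.prems(3) transfer(2)])
    moreover from calculation(4) have "act m (1 # w2) (Some (x # zs, R, out)) = Some ([], R', out')"
      using Cons.prems(4) by (simp add: move.simps)
    ultimately show ?thesis by blast
  next
    case (rear j R1 out1)
    with Cons.IH[OF Cons.prems(1) rear(3) Cons.prems(3,4)] rest obtain L' R' zs w1 w2 where
      "S' = L' @ R'" "length L' = l" "act l w1 (Some (inp, L, [])) = Some (inp', L', zs)"
      "act m w2 (Some (zs, R1, out1)) = Some ([], R', out')"
      by blast
    moreover from this(4) have "act m (j # w2) (Some (zs, R, out)) = Some ([], R', out')"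
      using rear(2) by simp
    ultimately show ?thesis by blast
  qed
qed

lemma act_series_front:
  assumes "length L = l" "act l w (Some (inp, L, [])) = Some (inp', L', [])"
  shows "act (l + m) w (Some (inp, L @ R, out)) = Some (inp', L' @ R, out)"
  using assms
proof (induction w arbitrary: inp L)
  case (Cons i w)
  obtain inp1 L1 out1 where mv: "move l i (Some (inp, L, [])) = Some (inp1, L1, out1)"
    and rest: "act l w (Some (inp1, L1, out1)) = Some (inp', L', [])"
    using Cons.prems(2) by (cases "move l i (Some (inp, L, []))") auto
  have "out1 = []"
    using act_prepend_outputD[of l w inp1 L1 out1 "[]"] rest by auto
  then have "i \<le> l"
    using mv by (auto elim: move_SomeE)
  have "length L1 = l" using length_move[OF mv] Cons.prems(1) by simp
  with Cons.IH rest \<open>out1 = []\<close> have "act (l + m) w (Some (inp1, L1 @ R, out)) = Some (inp', L' @ R, out)"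
    by blast
  then show ?case using move_series_front[OF Cons.prems(1) \<open>i \<le> l\<close>, of m inp R out] mv by simp
qed simp

lemma act_first_output:
  assumes "act l w (Some (inp, L, [])) = Some (inp', L', z # zs)"
  shows "\<exists>w0 w1 inp1 L1 xs. w = w0 @ (l + 1) # w1 \<and>
    act l w0 (Some (inp, L, [])) = Some (inp1, L1, []) \<and> L1 ! (l - 1) = z # xs \<and>
    act l w1 (Some (inp1, L1[l - 1 := xs], [])) = Some (inp', L', zs)"
  using assms
proof (induction w arbitrary: inp L)
  case (Cons i w)
  obtain inp1 L1 out1 where mv: "move l i (Some (inp, L, [])) = Some (inp1, L1, out1)"
    and rest: "act l w (Some (inp1, L1, out1)) = Some (inp', L', z # zs)"
    using Cons.prems by (cases "move l i (Some (inp, L, []))") auto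
  show ?case
  proof (cases "i \<le> l")
    case True
    then have "out1 = []" using move_output_unchanged[OF mv] by simp
    with Cons.IH rest obtain w0 w1 inp2 L2 xs where "w = w0 @ (l + 1) # w1"
      "act l w0 (Some (inp1, L1, [])) = Some (inp2, L2, [])" "L2 ! (l - 1) = z # xs"
      "act l w1 (Some (inp2, L2[l - 1 := xs], [])) = Some (inp', L', zs)"
      by blast
    moreover from this(2) have "act l (i # w0) (Some (inp, L, [])) = Some (inp2, L2, [])"
      using mv \<open>out1 = []\<close> by simp
    ultimately show ?thesis by (metis append_Cons)
  next
    case False
    with mv obtain xs where pop: "i = l + 1" "L ! (l - 1) = hd out1 # xs"
      "inp1 = inp" "L1 = L[l - 1 := xs]" "out1 = [hd out1]"
      by (elim move_SomeE) auto
    then have "act l w (Some (inp, L[l - 1 := xs], [hd out1] @ [])) = Some (inp', L', z # zs)"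
      using rest by simp
    from act_prepend_outputD[OF this] have "hd out1 = z"
      "act l w (Some (inp, L[l - 1 := xs], [])) = Some (inp', L', zs)"
      by auto
    moreover have "i # w = [] @ (l + 1) # w" "act l [] (Some (inp, L, [])) = Some (inp, L, [])"
      using pop by simp_all
    ultimately show ?thesis using pop by metis
  qed
qed simp

lemma act_series_compose:
  assumes "length L = l" "length R = m" "1 \<le> l" "1 \<le> m"
    and "act l w1 (Some (inp, L, [])) = Some (inp', L', zs)"
    and "act m w2 (Some (zs, R, out)) = Some ([], R', out')"
  shows "\<exists>w. act (l + m) w (Some (inp, L @ R, out)) = Some (inp', L' @ R', out')"
  using assms
proof (induction w2 arbitrary: w1 inp L zs R out)
  case Nil
  then have "act (l + m) w1 (Some (inp, L @ R, out)) = Some (inp', L' @ R', out')"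
    using act_series_front[OF Nil.prems(1)] by simp
  then show ?case by blast
next
  case (Cons j w2)
  obtain zs1 R1 out1 where mv: "move m j (Some (zs, R, out)) = Some (zs1, R1, out1)"
    and rest: "act m w2 (Some (zs1, R1, out1)) = Some ([], R', out')"
    using Cons.prems(6) by (cases "move m j (Some (zs, R, out))") auto
  have len: "length R1 = m" using length_move[OF mv] Cons.prems(2) by simp
  show ?case
  proof (cases "j = 1")
    case True
    \<comment> \<open>The back system consumes the front system's first output, so split the front run there.\<close>
    then obtain z where zs: "zs = z # zs1" and R1: "R1 = R[0 := z # R ! 0]" and "out1 = out"
      using mv by (elim move_SomeE) auto
    from act_first_output Cons.prems(5) zs obtain w0 w1' inp2 L2 xs where
      "w1 = w0 @ (l + 1) # w1'" and front: "act l w0 (Some (inp, L, [])) = Some (inp2, L2, [])"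
      and "L2 ! (l - 1) = z # xs" and front': "act l w1' (Some (inp2, L2[l - 1 := xs], [])) = Some (inp', L', zs1)"
      by blast
    have "length L2 = l" using length_act[OF front] Cons.prems(1) by simp
    then have "length (L2[l - 1 := xs]) = l" by simp
    from Cons.IH[OF this len Cons.prems(3,4) front'] rest \<open>out1 = out\<close> obtain w where
      "act (l + m) w (Some (inp2, L2[l - 1 := xs] @ R1, out)) = Some (inp', L' @ R', out')"
      by auto
    moreover have "move (l + m) (l + 1) (Some (inp2, L2 @ R, out)) = Some (inp2, L2[l - 1 := xs] @ R1, out)"
      using move_series_transfer[OF \<open>length L2 = l\<close> Cons.prems(2-4)] \<open>L2 ! (l - 1) = z # xs\<close> R1
      by simp
    ultimately have "act (l + m) (w0 @ (l + 1) # w) (Some (inp, L @ R, out)) = Some (inp', L' @ R', out')"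
      using act_series_front[OF Cons.prems(1) front] by (simp add: act_append)
    then show ?thesis by blast
  next
    case False
    then have "2 \<le> j" using move_Some_imp_valid[of m j] mv by fastforce
    then have "zs1 = zs" using move_input_unchanged[OF mv] by simp
    then obtain w where "act (l + m) w (Some (inp, L @ R1, out1)) = Some (inp', L' @ R', out')"
      using Cons.IH[OF Cons.prems(1) len Cons.prems(3-5)] rest by blast
    moreover have "move (l + m) (l + j) (Some (inp, L @ R, out)) = Some (inp, L @ R1, out1)"
      using move_series_back[OF Cons.prems(1-4) \<open>2 \<le> j\<close>, of inp out zs] mv by simp
    ultimately have "act (l + m) ((l + j) # w) (Some (inp, L @ R, out)) = Some (inp', L' @ R', out')"
      by simp
    then show ?thesis by blast
  qed
qed

definition reach :: "nat \<Rightarrow> nat list \<Rightarrow> nat list \<Rightarrow> bool" where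
  "reach k xs ys \<longleftrightarrow>
     (\<exists>w. act k w (Some (xs, replicate k [], [])) = Some ([], replicate k [], ys))"

lemma reach_add_split:
  assumes "1 \<le> l" "1 \<le> m" "reach (l + m) xs ys"
  shows "\<exists>zs. reach l xs zs \<and> reach m zs ys"
proof -
  obtain w where "act (l + m) w (Some (xs, replicate l [] @ replicate m [], [])) =
      Some ([], replicate l [] @ replicate m [], ys)"
    using assms(3) by (auto simp: reach_def replicate_add)
  from act_series_split[OF _ _ assms(1,2) this] obtain L' R' zs w1 w2 where
    "replicate l [] @ replicate m [] = L' @ R'" "length L' = l"
    "act l w1 (Some (xs, replicate l [], [])) = Some ([], L', zs)"
    "act m w2 (Some (zs, replicate m [], [])) = Some ([], R', ys)"
    by auto
  then show ?thesis by (auto simp: reach_def append_eq_append_conv)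
qed

lemma reach_add:
  assumes "1 \<le> l" "1 \<le> m" "reach l xs zs" "reach m zs ys"
  shows "reach (l + m) xs ys"
proof -
  obtain w1 w2 where
    "act l w1 (Some (xs, replicate l [], [])) = Some ([], replicate l [], zs)"
    "act m w2 (Some (zs, replicate m [], [])) = Some ([], replicate m [], ys)"
    using assms(3,4) by (auto simp: reach_def)
  from act_series_compose[OF _ _ assms(1,2) this] show ?thesis
    by (auto simp: reach_def replicate_add)
qed

lemma act_one_stack_pass_through:
  "act 1 (concat (replicate (length u) [1, 2])) (Some (u @ r, [[]], out)) = Some (r, [[]], out @ u)"
  by (induction u arbitrary: out) (simp_all add: move.simps)

lemma reach_one_refl: "reach 1 xs xs"
  using act_one_stack_pass_through[of xs "[]" "[]"] by (auto simp: reach_def)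

lemma reach_one_swap: "reach 1 (u @ a # b # v) (u @ b # a # v)"
proof -
  let ?pass = "\<lambda>xs. concat (replicate (length xs) [1, 2 :: nat])"
  have "act 1 (?pass u @ [1, 1, 2, 2] @ ?pass v) (Some (u @ a # b # v, [[]], [])) =
      act 1 (?pass v) (act 1 [1, 1, 2, 2] (Some (a # b # v, [[]], u)))"
    using act_one_stack_pass_through[of u "a # b # v" "[]"] by (simp add: act_append)
  also have "act 1 [1, 1, 2, 2] (Some (a # b # v, [[]], u)) = Some (v, [[]], u @ [b, a])"
    by (simp add: move.simps)
  also have "act 1 (?pass v) \<dots> = Some ([], [[]], u @ b # a # v)"
    using act_one_stack_pass_through[of v "[]" "u @ [b, a]"] by simp
  finally show ?thesis unfolding reach_def by auto
qed

lemma reach_mono: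
  assumes "1 \<le> k" "k \<le> K" "reach k xs ys"
  shows "reach K xs ys"
  using assms(2,3)
proof (induction K rule: dec_induct)
  case (step K)
  then show ?case using reach_add[of K 1 xs ys ys] reach_one_refl assms(1) by simp
qed

lemma reach_mset: "reach k xs ys \<Longrightarrow> mset ys = mset xs"
  using act_preserves_mset[of "replicate k []" k _ xs "[]" "[]" "replicate k []" ys]
  by (auto simp: reach_def)

declare upt_Suc [simp del]

definition adjacent_swap :: "'a list \<Rightarrow> 'a list \<Rightarrow> bool" where
  "adjacent_swap xs ys \<longleftrightarrow> (\<exists>u a b v. xs = u @ a # b # v \<and> ys = u @ b # a # v)"

lemma adjacent_swap_rtranclp_Cons:
  "adjacent_swap\<^sup>*\<^sup>* xs ys \<Longrightarrow> adjacent_swap\<^sup>*\<^sup>* (y # xs) (y # ys)"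
proof (induction rule: rtranclp_induct)
  case (step ys zs)
  have "adjacent_swap (y # ys) (y # zs)"
    using step(2) unfolding adjacent_swap_def by (metis append_Cons)
  with step(3) show ?case by simp
qed simp

lemma adjacent_swap_rtranclp_to_front: "adjacent_swap\<^sup>*\<^sup>* (u @ y # v) (y # u @ v)"
proof (induction u arbitrary: v rule: rev_induct)
  case (snoc a u)
  have "adjacent_swap ((u @ [a]) @ y # v) (u @ y # a # v)"
    unfolding adjacent_swap_def by force
  with snoc.IH[of "a # v"] show ?case by simp
qed simp

lemma mset_eq_imp_adjacent_swap_rtranclp: "mset ys = mset xs \<Longrightarrow> adjacent_swap\<^sup>*\<^sup>* xs ys"
proof (induction ys arbitrary: xs)
  case (Cons y ys)
  then obtain u v where xs: "xs = u @ y # v"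
    by (metis list.set_intros(1) set_mset_mset split_list)
  with Cons have "adjacent_swap\<^sup>*\<^sup>* (y # u @ v) (y # ys)"
    by (simp add: adjacent_swap_rtranclp_Cons)
  then show ?case using adjacent_swap_rtranclp_to_front[of u y v] xs by simp
qed simp

lemma adjacent_swap_rtranclp_imp_reach:
  "adjacent_swap\<^sup>*\<^sup>* xs ys \<Longrightarrow> \<exists>k\<ge>1. reach k xs ys"
proof (induction rule: rtranclp_induct)
  case base
  then show ?case using reach_one_refl by blast
next
  case (step ys zs)
  then obtain k where "1 \<le> k" "reach k xs ys" by blast
  moreover have "reach 1 ys zs" using step(2) reach_one_swap unfolding adjacent_swap_def by blast
  ultimately have "reach (k + 1) xs zs" using reach_add by blast
  then show ?case by (intro exI[of _ "k + 1"]) simp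
qed

lemma Pnk_eq_reach:
  "Pnk n k = {\<pi>. \<pi> permutes {1..n} \<and> reach k [1..<n+1] (map \<pi> [1..<n+1])}"
  unfolding Pnk_def reach_def init_state_def target_state_def
  using act_Some_imp_lists by (metis (no_types, lifting) option.distinct(1))

lemma map_upt_permutation_in_permutations_of_set:
  "\<pi> permutes {1..n} \<Longrightarrow> map \<pi> [1..<n+1] \<in> permutations_of_set {1..n}"
  using permutations_of_set_image_permutes[of \<pi> "{1..n}"]
  by (metis atLeastLessThanSuc_atLeastAtMost distinct_upt image_eqI permutations_of_setI
      set_upt Suc_eq_plus1)

lemma bij_betw_map_upt_permutations:
  "bij_betw (\<lambda>\<pi>. map \<pi> [1..<n+1]) {\<pi>. \<pi> permutes {1..n}} (permutations_of_set {1..n})"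
proof (rule bij_betw_imageI)
  show "inj_on (\<lambda>\<pi>. map \<pi> [1..<n+1]) {\<pi>. \<pi> permutes {1..n}}"
  proof (rule inj_onI, rule ext)
    fix p q x
    assume "p \<in> {\<pi>. \<pi> permutes {1..n}}" "q \<in> {\<pi>. \<pi> permutes {1..n}}"
      and "map p [1..<n+1] = map q [1..<n+1]"
    then show "p x = q x"
      by (cases "x \<in> {1..n}") (auto simp: permutes_not_in map_eq_conv)
  qed
  show "(\<lambda>\<pi>. map \<pi> [1..<n+1]) ` {\<pi>. \<pi> permutes {1..n}} = permutations_of_set {1..n}"
  proof
    show "(\<lambda>\<pi>. map \<pi> [1..<n+1]) ` {\<pi>. \<pi> permutes {1..n}} \<subseteq> permutations_of_set {1..n}"
      using map_upt_permutation_in_permutations_of_set by blast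
  next
    show "permutations_of_set {1..n} \<subseteq> (\<lambda>\<pi>. map \<pi> [1..<n+1]) ` {\<pi>. \<pi> permutes {1..n}}"
    proof
      fix ys assume ys: "ys \<in> permutations_of_set {1..n}"
      then have len: "length ys = n" by (simp add: length_finite_permutations_of_set)
      define \<pi> where "\<pi> i = (if i \<in> {1..n} then ys ! (i - 1) else i)" for i
      have map: "map \<pi> [1..<n+1] = ys"
        by (rule nth_equalityI) (auto simp: \<pi>_def len nth_upt)
      have "inj_on \<pi> {1..n}"
        using ys len by (auto intro!: inj_onI simp: \<pi>_def permutations_of_set_def nth_eq_iff_index_eq)
      moreover have "\<pi> ` {1..n} = {1..n}"
        using ys map by (metis atLeastLessThanSuc_atLeastAtMost list.set_map permutations_of_setD(1)
            set_upt Suc_eq_plus1)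
      ultimately have "\<pi> permutes {1..n}"
        by (intro bij_imp_permutes) (auto simp: bij_betw_def \<pi>_def)
      with map show "ys \<in> (\<lambda>\<pi>. map \<pi> [1..<n+1]) ` {\<pi>. \<pi> permutes {1..n}}" by blast
    qed
  qed
qed

lemma reach_upt_in_permutations_of_set:
  "reach k [1..<n+1] ys \<Longrightarrow> ys \<in> permutations_of_set {1..n}"
  using reach_mset[of k "[1..<n+1]" ys]
  by (metis atLeastLessThanSuc_atLeastAtMost distinct_upt mset_eq_imp_distinct_iff mset_eq_setD
      permutations_of_setI set_upt Suc_eq_plus1)

lemma ex_reach_all_permutations:
  "\<exists>K\<ge>1. \<forall>ys\<in>permutations_of_set {1..n}. reach K [1..<n+1] ys"
proof -
  have "\<forall>ys\<in>permutations_of_set {1..n}. \<exists>k. 1 \<le> k \<and> reach k [1..<n+1] ys"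
    by (metis adjacent_swap_rtranclp_imp_reach mset_eq_imp_adjacent_swap_rtranclp
        atLeastLessThanSuc_atLeastAtMost distinct_upt permutations_of_setD set_eq_iff_mset_eq_distinct
        set_upt Suc_eq_plus1)
  then obtain f where f: "\<forall>ys\<in>permutations_of_set {1..n}. 1 \<le> f ys \<and> reach (f ys) [1..<n+1] ys"
    by metis
  define K where "K = Max (insert 1 (f ` permutations_of_set {1..n}))"
  have "finite (insert 1 (f ` permutations_of_set {1..n}))" by simp
  from Max_ge[OF this] have "1 \<le> K" "\<forall>ys\<in>permutations_of_set {1..n}. f ys \<le> K"
    unfolding K_def by blast+
  with f show ?thesis using reach_mono by blast
qed

lemma kn_spec: "1 \<le> kn n" "Pnk n (kn n) = {\<pi>. \<pi> permutes {1..n}}"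
proof -
  obtain K where "1 \<le> K" "\<forall>ys\<in>permutations_of_set {1..n}. reach K [1..<n+1] ys"
    using ex_reach_all_permutations by blast
  then have "1 \<le> K \<and> Pnk n K = {\<pi>. \<pi> permutes {1..n}}"
    unfolding Pnk_eq_reach using map_upt_permutation_in_permutations_of_set by blast
  then have "1 \<le> kn n \<and> Pnk n (kn n) = {\<pi>. \<pi> permutes {1..n}}"
    unfolding kn_def by (rule LeastI)
  then show "1 \<le> kn n" "Pnk n (kn n) = {\<pi>. \<pi> permutes {1..n}}" by simp_all
qed

definition outputs :: "nat \<Rightarrow> nat \<Rightarrow> nat list set" where
  "outputs k n = {ys. reach k [1..<n+1] ys}"

lemma outputs_subset_permutations_of_set: "outputs k n \<subseteq> permutations_of_set {1..n}"
  unfolding outputs_def using reach_upt_in_permutations_of_set by blast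

lemma finite_outputs: "finite (outputs k n)"
  using outputs_subset_permutations_of_set finite_permutations_of_set by (rule finite_subset)

lemma length_outputs: "ys \<in> outputs k n \<Longrightarrow> length ys = n"
  using outputs_subset_permutations_of_set length_finite_permutations_of_set[of ys "{1..n}"] by auto

lemma map_map_eq_replicate_Nil_iff: "map (map g) st = replicate m [] \<longleftrightarrow> st = replicate m []"
proof (induction st arbitrary: m)
  case (Cons x st)
  then show ?case by (cases m) auto
qed simp

lemma reach_relabel:
  assumes "length zs = n" "reach m zs ys"
  shows "ys \<in> map (\<lambda>i. zs ! (i - 1)) ` outputs m n"
proof -
  define g where "g i = zs ! (i - 1)" for i
  have zs: "zs = map g [1..<n+1]"
    by (rule nth_equalityI) (auto simp: g_def assms(1) nth_upt)
  obtain w where "act m w (Some (zs, replicate m [], [])) = Some ([], replicate m [], ys)"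
    using assms(2) unfolding reach_def by blast
  then have "map_state g (act m w (Some ([1..<n+1], replicate m [], []))) =
      Some ([], replicate m [], ys)"
    using act_map_state[of "replicate m []" m w g "[1..<n+1]" "[]"] zs by (simp add: map_state_def)
  then obtain inp' st' out' where
    "act m w (Some ([1..<n+1], replicate m [], [])) = Some (inp', st', out')"
    "map g inp' = []" "map (map g) st' = replicate m []" "map g out' = ys"
    by (auto simp: map_state_def)
  then have "out' \<in> outputs m n" "map g out' = ys"
    by (auto simp: outputs_def reach_def map_map_eq_replicate_Nil_iff)
  then show ?thesis unfolding g_def by blast
qed

lemma card_outputs_add:
  assumes "1 \<le> l" "1 \<le> m"
  shows "card (outputs (l + m) n) \<le> card (outputs l n) * card (outputs m n)"
proof -
  let ?relabel = "\<lambda>zs. map (\<lambda>i. zs ! (i - 1)) ` outputs m n"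
  have "outputs (l + m) n \<subseteq> (\<Union>zs\<in>outputs l n. ?relabel zs)"
  proof
    fix ys assume "ys \<in> outputs (l + m) n"
    then obtain zs where "reach l [1..<n+1] zs" "reach m zs ys"
      using reach_add_split[OF assms] by (auto simp: outputs_def)
    then have "zs \<in> outputs l n" "ys \<in> ?relabel zs"
      using reach_relabel length_outputs by (auto simp: outputs_def)
    then show "ys \<in> (\<Union>zs\<in>outputs l n. ?relabel zs)" by blast
  qed
  then have "card (outputs (l + m) n) \<le> card (\<Union>zs\<in>outputs l n. ?relabel zs)"
    by (intro card_mono) (simp_all add: finite_outputs)
  also have "\<dots> \<le> (\<Sum>zs\<in>outputs l n. card (?relabel zs))"
    by (rule card_UN_le[OF finite_outputs])
  also have "\<dots> \<le> (\<Sum>zs\<in>outputs l n. card (outputs m n))"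
    by (intro sum_mono card_image_le finite_outputs)
  finally show ?thesis by simp
qed

lemma card_outputs_mult:
  assumes "1 \<le> l" "1 \<le> a"
  shows "card (outputs (a * l) n) \<le> card (outputs l n) ^ a"
  using assms(2)
proof (induction a rule: dec_induct)
  case (step a)
  have "card (outputs (a * l + l) n) \<le> card (outputs (a * l) n) * card (outputs l n)"
    using card_outputs_add[of "a * l" l n] assms(1) step.hyps(1) by simp
  also have "\<dots> \<le> card (outputs l n) ^ a * card (outputs l n)"
    using step.IH by simp
  finally show ?case by (simp add: add.commute mult.commute)
qed simp

lemma card_outputs_mono: "1 \<le> k \<Longrightarrow> k \<le> K \<Longrightarrow> card (outputs k n) \<le> card (outputs K n)"
  by (intro card_mono finite_outputs) (auto simp: outputs_def intro: reach_mono)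

lemma card_Pnk_eq_card_outputs: "card (Pnk n k) = card (outputs k n)"
proof -
  let ?f = "\<lambda>\<pi>. map \<pi> [1..<n+1]"
  have "Pnk n k \<subseteq> {\<pi>. \<pi> permutes {1..n}}" by (auto simp: Pnk_def)
  then have "bij_betw ?f (Pnk n k) (?f ` Pnk n k)"
    using bij_betw_map_upt_permutations bij_betw_subset by blast
  moreover have "?f ` Pnk n k = outputs k n"
  proof
    show "?f ` Pnk n k \<subseteq> outputs k n" by (auto simp: Pnk_eq_reach outputs_def)
  next
    show "outputs k n \<subseteq> ?f ` Pnk n k"
    proof
      fix ys assume ys: "ys \<in> outputs k n"
      then have "ys \<in> ?f ` {\<pi>. \<pi> permutes {1..n}}"
        using outputs_subset_permutations_of_set bij_betw_imp_surj_on[OF bij_betw_map_upt_permutations]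
        by blast
      then obtain \<pi> where "\<pi> permutes {1..n}" "ys = ?f \<pi>" by blast
      with ys show "ys \<in> ?f ` Pnk n k" by (auto simp: Pnk_eq_reach outputs_def)
    qed
  qed
  ultimately show ?thesis by (simp add: bij_betw_same_card)
qed

lemma fact_le_card_Pnk_power:
  assumes "1 \<le> l"
  shows "fact n \<le> card (Pnk n l) ^ (kn n div l + 1)"
proof -
  let ?a = "kn n div l + 1"
  have "kn n = kn n div l * l + kn n mod l" "kn n mod l < l" "?a * l = kn n div l * l + l"
    using assms by simp_all
  then have "kn n \<le> ?a * l" by linarith
  have "fact n = card {\<pi>. \<pi> permutes {1..n}}" by (simp add: card_permutations)
  also have "\<dots> = card (outputs (kn n) n)" using kn_spec(2) card_Pnk_eq_card_outputs by metis
  also have "\<dots> \<le> card (outputs (?a * l) n)"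
    by (rule card_outputs_mono[OF kn_spec(1) \<open>kn n \<le> ?a * l\<close>])
  also have "\<dots> \<le> card (outputs l n) ^ ?a" by (rule card_outputs_mult[OF assms]) simp
  also have "\<dots> = card (Pnk n l) ^ ?a" by (simp add: card_Pnk_eq_card_outputs)
  finally show ?thesis .
qed

lemma n_ln_n_minus_n_le_ln_fact:
  assumes "1 \<le> n"
  shows "real n * ln (real n) - real n \<le> ln (fact n)"
proof -
  let ?term = "\<lambda>k. real n ^ k /\<^sub>R fact k"
  have "sum ?term {n} \<le> suminf ?term"
    by (rule sum_le_suminf[OF sums_summable[OF exp_converges]]) auto
  also have "suminf ?term = exp (real n)" by (rule sums_unique[OF exp_converges, symmetric])
  finally have "real n ^ n / fact n \<le> exp (real n)" by (simp add: divide_inverse mult.commute)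
  then have "ln (real n ^ n / fact n) \<le> ln (exp (real n))"
    using assms by (subst ln_le_cancel_iff) auto
  then show ?thesis using assms by (simp add: ln_div ln_realpow)
qed

lemma ln_minus_const_le_of_n_ln_n_le:
  fixes n a L \<beta> :: real
  assumes "1 \<le> n" "0 < \<beta>" "0 \<le> L" "n * ln n - n \<le> a * (L + n * \<beta>)"
  shows "ln n - (1 + L / \<beta>) \<le> a * \<beta>"
proof (cases "ln n \<le> a * \<beta>")
  case True
  then show ?thesis using assms(2,3) by (smt (verit) divide_nonneg_pos)
next
  case False
  then have "a \<le> n / \<beta>"
    using assms(1,2) ln_le_minus_one[of n] by (simp add: field_simps)
  then have "a * L \<le> n * (L / \<beta>)"
    using assms(3) by (metis mult_right_mono times_divide_eq_left times_divide_eq_right)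
  then have "n * (ln n - (1 + L / \<beta>)) \<le> n * (a * \<beta>)"
    using assms(4) by (simp add: algebra_simps)
  then show ?thesis using assms(1) by simp
qed

lemma kn_lower_bound:
  fixes b C :: real
  assumes "1 \<le> l" "1 < b" "1 \<le> C" "1 \<le> n" "real (card (Pnk n l)) \<le> C * b ^ n"
  shows "real l * log 2 (real n) / log 2 b - real l * (1 + (1 + ln C / ln b) / ln b) \<le> real (kn n)"
proof -
  define a where "a = kn n div l + 1"
  define D where "D = 1 + ln C / ln b"
  have pos: "0 < C * b ^ n" using assms(2,3) by simp
  have "(fact n :: real) \<le> real (card (Pnk n l)) ^ a"
    using fact_le_card_Pnk_power[OF assms(1), of n] unfolding a_def
    by (metis of_nat_fact of_nat_le_iff of_nat_power)
  also have "\<dots> \<le> (C * b ^ n) ^ a" by (rule power_mono[OF assms(5)]) simp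
  finally have "ln (fact n) \<le> ln ((C * b ^ n) ^ a)" using pos by (subst ln_le_cancel_iff) auto
  also have "\<dots> = real a * (ln C + real n * ln b)"
    using assms(2,3) by (simp add: ln_realpow ln_mult)
  finally have "ln (real n) - D \<le> real a * ln b"
    unfolding D_def using n_ln_n_minus_n_le_ln_fact[OF assms(4)] assms(2-4)
    by (intro ln_minus_const_le_of_n_ln_n_le) auto
  then have "ln (real n) / ln b \<le> real a + D / ln b"
    using assms(2) by (simp add: field_simps)
  moreover have "real l * real a \<le> real (kn n) + real l"
    unfolding a_def using div_times_less_eq_dividend[of "kn n" l]
    by (simp add: algebra_simps flip: of_nat_mult of_nat_add)
  ultimately have "real l * (ln (real n) / ln b) \<le> real (kn n) + real l + real l * (D / ln b)"
    by (smt (verit) distrib_left mult_left_mono of_nat_0_le_iff)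
  then show ?thesis by (simp add: log_def D_def algebra_simps)
qed

theorem proposition2:
  fixes l :: nat and b :: real
  assumes "l \<ge> 1" and "b > 1"
    and "(\<lambda>n. real (card (Pnk n l))) \<in> O(\<lambda>n. b ^ n)"
  shows "\<exists>C. \<forall>\<^sub>F n in at_top.
           real l * log 2 (real n) / log 2 b - C \<le> real (kn n)"
proof -
  obtain c where "\<forall>\<^sub>F n in at_top. norm (real (card (Pnk n l))) \<le> c * norm (b ^ n)"
    using landau_o.bigE[OF assms(3)] by blast
  then have "\<forall>\<^sub>F n in at_top. 1 \<le> n \<and> real (card (Pnk n l)) \<le> max c 1 * b ^ n"
    using eventually_ge_at_top[of 1]
  proof eventually_elim
    case (elim n)
    have "real (card (Pnk n l)) \<le> c * b ^ n" using elim(1) assms(2) by (simp add: norm_power)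
    also have "\<dots> \<le> max c 1 * b ^ n" using assms(2) by (intro mult_right_mono) auto
    finally show ?case using elim(2) by simp
  qed
  then have "\<forall>\<^sub>F n in at_top. real l * log 2 (real n) / log 2 b
      - real l * (1 + (1 + ln (max c 1) / ln b) / ln b) \<le> real (kn n)"
    by eventually_elim (use kn_lower_bound assms(1,2) in auto)
  then show ?thesis by blast
qed

end
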